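(* For $i\in\{1,\dots,N\}$ and $m\geq 0$ let $a^{(m)}_i\in\mathbb{C}$ be the scalar with $C^{(2m+1)}_{ii}\cdot v=a^{(m)}_i v$ (such scalars exist, since $C^{(2m+1)}_{ii}\cdot v$ is a scalar multiple of $v$). Then, as formal Laurent series in $u^{-1}$, $$\sum_{m=0}^\infty a^{(m)}_i\,u^{-2m-1}=\frac{u\,\lambda_i}{u^2-\lambda_i(\lambda_i-1)}\prod_{j=i+1}^{N}\frac{u^2-\lambda_j(\lambda_j+1)}{u^2-\lambda_j(\lambda_j-1)},$$ where each factor $(u^2-c)^{-1}$ is expanded as $\sum_{k\ge0}c^k u^{-2k-2}$.
   Context: Let $N\geq1$, $I=\{-N,\dots,-1,1,\dots,N\}$, and for $k\in I$ put $\bar k=0$ if $k>0$, $\bar k=1$ if $k<0$. The Lie superalgebra $\mathfrak{q}(N)$ over $\mathbb{C}$ is spanned by elements $F_{ij}$ ($i,j\in I$) with $F_{-i,-j}=F_{ij}$ (realized as $F_{ij}=E_{ij}+E_{-i,-j}\in\mathfrak{gl}(N|N)$), $F_{ij}$ of parity $\bar\imath+\bar\jmath\bmod 2$, and supercommutator $$[F_{ij}, F_{kl}] = \delta_{kj} F_{il} - (-1)^{(\bar{\imath}+ \bar{\jmath})(\bar{k} + \bar{l})} \delta_{il} F_{kj} + \delta_{k,-j} F_{-i,l} - (-1)^{(\bar{\imath} + \bar{\jmath})(\bar{k} + \bar{l})} \delta_{-i,l} F_{k,-j}.$$ For $n\geq1$ define $C^{(n)}_{ij}\in U(\mathfrak{q}(N))$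 by $$C^{(n)}_{ij} = \sum_{k_1,\ldots,k_{n-1}\in I}F_{ik_1} (-1)^{\bar{k}_1} F_{k_1k_2} (-1)^{\bar{k}_2} \cdots F_{k_{n-2}k_{n-1}} (-1)^{\bar{k}_{n-1}} F_{k_{n-1}j}$$ (so $C^{(1)}_{ij}=F_{ij}$). Let $V$ be a representation of $\mathfrak{q}(N)$ and $v\in V$ a vector such that $F_{ij}\cdot v=0$ whenever $|i|<|j|$, and $F_{ii}\cdot v=\lambda_i v$ for $i=1,\dots,N$, where $\lambda_1,\dots,\lambda_N\in\mathbb{C}$. *)

theory Defs
  imports Main "HOL-Computational_Algebra.Formal_Laurent_Series"
begin

definition qI :: "nat \<Rightarrow> int set" where
  "qI N = {- int N .. int N} - {0}"

definition qpar :: "int \<Rightarrow> nat" where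
  "qpar k = (if k < 0 then 1 else 0)"

definition qsgn :: "int \<Rightarrow> int \<Rightarrow> int \<Rightarrow> int \<Rightarrow> complex" where
  "qsgn i j k l = (-1) ^ ((qpar i + qpar j) * (qpar k + qpar l))"

text \<open>A representation of q(N) (i.e. a module over U(q(N))) on a complex vector
  space with scalar multiplication sc: F i j is the operator by which F_ij acts.\<close>
definition qN_rep :: "nat \<Rightarrow> (complex \<Rightarrow> 'v::ab_group_add \<Rightarrow> 'v) \<Rightarrow> (int \<Rightarrow> int \<Rightarrow> 'v \<Rightarrow> 'v) \<Rightarrow> bool" where
  "qN_rep N sc F \<longleftrightarrow>
     vector_space sc \<and>
     (\<forall>i\<in>qI N. \<forall>j\<in>qI N. Vector_Spaces.linear sc sc (F i j)) \<and>
     (\<forall>i\<in>qI N. \<forall>j\<in>qI N. F (-i) (-j) = F i j) \<and>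
     (\<forall>i\<in>qI N. \<forall>j\<in>qI N. \<forall>k\<in>qI N. \<forall>l\<in>qI N. \<forall>w.
        F i j (F k l w) - sc (qsgn i j k l) (F k l (F i j w)) =
          (if k = j then F i l w else 0)
          - sc (qsgn i j k l) (if i = l then F k j w else 0)
          + (if k = - j then F (- i) l w else 0)
          - sc (qsgn i j k l) (if - i = l then F k (- j) w else 0))"

text \<open>Action of C^{(n)}_ij on a vector w (n \<ge> 1; the value for n = 0 is irrelevant):
  C^{(n+1)}_ij w = sum over k in I of F_ik ((-1)^(bar k) C^{(n)}_kj w).\<close>
fun qC :: "nat \<Rightarrow> (complex \<Rightarrow> 'v::ab_group_add \<Rightarrow> 'v) \<Rightarrow> (int \<Rightarrow> int \<Rightarrow> 'v \<Rightarrow> 'v)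
            \<Rightarrow> nat \<Rightarrow> int \<Rightarrow> int \<Rightarrow> 'v \<Rightarrow> 'v" where
  "qC N sc F 0 i j w = w"
| "qC N sc F (Suc 0) i j w = F i j w"
| "qC N sc F (Suc (Suc n)) i j w =
     (\<Sum>k\<in>qI N. F i k (sc ((-1) ^ qpar k) (qC N sc F (Suc n) k j w)))"

end

theory Submission
  imports Defs
begin

text \<open>
  For n \<ge> 1 the operators C^(n)_cd obey the same supercommutation relations with F_ab as
  F_cd itself. Applied to the highest weight vector v this gives C^(n)_kl v = 0 for |k| < |l|
  and, together with the symmetry C^(n)_{-c,-d} = (-1)^(n-1) C^(n)_cd and F_{-i,i}^2 = F_ii,
  the two-step recursion a^(m+1)_i = \<lambda>_i (\<lambda>_i - 1) a^(m)_i - 2 \<lambda>_i \<Sum>_{j>i} a^(m)_j.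
  For the generating series G_i this is the triangular system
  (u^2 - \<lambda>_i (\<lambda>_i - 1)) G_i = \<lambda>_i u - 2 \<lambda>_i \<Sum>_{j>i} G_j, solved by downward induction
  on i together with 2 \<Sum>_{j>i} G_j = u (1 - P_i), where P_i is the product in the theorem.
\<close>

abbreviation qsign :: "int \<Rightarrow> complex" where
  "qsign k \<equiv> (-1) ^ qpar k"

lemma qsgn_mult: "qsgn a b c k * qsgn a b k d = qsgn a b c d"
  unfolding qsgn_def qpar_def
  by (auto simp: power_add[symmetric] algebra_simps power_mult_distrib)

lemma qsgn_qsign_swap:
  "a \<noteq> 0 \<Longrightarrow> b \<noteq> 0 \<Longrightarrow> qsgn a b c b * qsign b = qsgn a b c a * qsign a"
  unfolding qsgn_def qpar_def by auto

lemma qsgn_qsign_swap_uminus: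
  "a \<noteq> 0 \<Longrightarrow> b \<noteq> 0 \<Longrightarrow> qsgn a b c (-b) * qsign (-b) = qsgn a b c (-a) * qsign (-a)"
  unfolding qsgn_def qpar_def by auto

lemma qsign_uminus: "k \<noteq> 0 \<Longrightarrow> qsign (-k) = - qsign k"
  unfolding qpar_def by auto

lemma uminus_mem_qI [simp]: "- a \<in> qI N \<longleftrightarrow> a \<in> qI N"
  unfolding qI_def by auto

lemma qI_nonzero: "a \<in> qI N \<Longrightarrow> a \<noteq> 0"
  unfolding qI_def by auto

lemma finite_qI [simp]: "finite (qI N)"
  unfolding qI_def by auto

lemma sum_qI_uminus: "(\<Sum>k\<in>qI N. f k) = (\<Sum>k\<in>qI N. f (- k))"
  by (rule sum.reindex_bij_witness[of _ uminus uminus]) auto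

lemma sum_qI_from:
  fixes f :: "int \<Rightarrow> 'a::comm_monoid_add"
  assumes i: "i \<in> {1..int N}" and vanish: "\<And>k. k \<in> qI N \<Longrightarrow> \<bar>k\<bar> < i \<Longrightarrow> f k = 0"
  shows "(\<Sum>k\<in>qI N. f k) = f i + f (-i) + (\<Sum>j\<in>{i+1..int N}. f j + f (-j))"
proof -
  have "(\<Sum>k\<in>qI N. f k) = (\<Sum>k\<in>{i..int N} \<union> uminus ` {i..int N}. f k)"
  proof (rule sum.mono_neutral_right)
    show "{i..int N} \<union> uminus ` {i..int N} \<subseteq> qI N"
      using i by (auto simp: qI_def)
    show "\<forall>k\<in>qI N - ({i..int N} \<union> uminus ` {i..int N}). f k = 0"
      using vanish by (force simp: qI_def image_iff)
  qed simp
  also have "\<dots> = (\<Sum>k\<in>{i..int N}. f k) + (\<Sum>k\<in>uminus ` {i..int N}. f k)"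
    by (rule sum.union_disjoint) (use i in auto)
  also have "(\<Sum>k\<in>uminus ` {i..int N}. f k) = (\<Sum>k\<in>{i..int N}. f (-k))"
    by (subst sum.reindex) (auto simp: inj_on_def)
  also have "{i..int N} = insert i {i+1..int N}"
    using i by auto
  finally show ?thesis
    by (simp add: sum.distrib algebra_simps)
qed

locale q_module = vector_space sc for sc :: "complex \<Rightarrow> 'v::ab_group_add \<Rightarrow> 'v" +
  fixes N :: nat and F :: "int \<Rightarrow> int \<Rightarrow> 'v \<Rightarrow> 'v"
  assumes linear_F: "i \<in> qI N \<Longrightarrow> j \<in> qI N \<Longrightarrow> Vector_Spaces.linear sc sc (F i j)"
    and F_uminus: "i \<in> qI N \<Longrightarrow> j \<in> qI N \<Longrightarrow> F (-i) (-j) = F i j"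
    and F_supercomm: "\<lbrakk>i \<in> qI N; j \<in> qI N; k \<in> qI N; l \<in> qI N\<rbrakk> \<Longrightarrow>
        F i j (F k l w) - sc (qsgn i j k l) (F k l (F i j w)) =
          (if k = j then F i l w else 0)
          - sc (qsgn i j k l) (if i = l then F k j w else 0)
          + (if k = - j then F (- i) l w else 0)
          - sc (qsgn i j k l) (if - i = l then F k (- j) w else 0)"

lemma qN_rep_imp_q_module: "qN_rep N sc F \<Longrightarrow> q_module sc N F"
  unfolding qN_rep_def q_module_def q_module_axioms_def by blast

context q_module
begin

abbreviation C :: "nat \<Rightarrow> int \<Rightarrow> int \<Rightarrow> 'v \<Rightarrow> 'v" where
  "C \<equiv> qC N sc F"

lemma C_Suc: "n \<ge> 1 \<Longrightarrow> C (Suc n) c d w = (\<Sum>k\<in>qI N. F c k (sc (qsign k) (C n k d w)))"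
  by (cases n) auto

lemma module_hom_F: "i \<in> qI N \<Longrightarrow> j \<in> qI N \<Longrightarrow> module_hom sc sc (F i j)"
  using linear_F by (simp add: module_hom_iff_linear)

lemma module_hom_C: "c \<in> qI N \<Longrightarrow> d \<in> qI N \<Longrightarrow> module_hom sc sc (C n c d)"
proof (induction n arbitrary: c)
  case 0
  then show ?case
    by (simp add: module_hom_iff module_axioms)
next
  case (Suc n)
  interpret module_pair sc sc ..
  show ?case
  proof (cases "n = 0")
    case True
    with Suc.prems show ?thesis
      by (simp add: module_hom_F)
  next
    case False
    have "module_hom sc sc (sc r)" for r
      by (simp add: module_hom_iff module_axioms scale_left_commute scale_right_distrib)
    then have "module_hom sc sc (F c k \<circ> sc (qsign k) \<circ> C n k d)" if "k \<in> qI N" for k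
      using that Suc by (intro module_hom_compose[of sc sc _ sc] module_hom_F Suc.IH) auto
    then have "module_hom sc sc (\<lambda>w. \<Sum>k\<in>qI N. F c k (sc (qsign k) (C n k d w)))"
      by (intro module_hom_sum) (auto simp: comp_def module_axioms)
    moreover have "C (Suc n) c d = (\<lambda>w. \<Sum>k\<in>qI N. F c k (sc (qsign k) (C n k d w)))"
      using False by (auto simp: C_Suc)
    ultimately show ?thesis
      by simp
  qed
qed

lemma scale_if_zero: "sc r (if P then y else 0) = (if P then sc r y else 0)"
  by simp

lemma F_add: "i \<in> qI N \<Longrightarrow> j \<in> qI N \<Longrightarrow> F i j (x + y) = F i j x + F i j y"
  using module_hom_F module_hom.add by blast

lemma F_scale: "i \<in> qI N \<Longrightarrow> j \<in> qI N \<Longrightarrow> F i j (sc r x) = sc r (F i j x)"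
  using module_hom_F module_hom.scale by blast

lemma F_diff: "i \<in> qI N \<Longrightarrow> j \<in> qI N \<Longrightarrow> F i j (x - y) = F i j x - F i j y"
  using module_hom_F module_hom.diff by blast

lemma F_neg: "i \<in> qI N \<Longrightarrow> j \<in> qI N \<Longrightarrow> F i j (- x) = - F i j x"
  using module_hom_F module_hom.neg by blast

lemma F_sum: "i \<in> qI N \<Longrightarrow> j \<in> qI N \<Longrightarrow> F i j (sum g A) = (\<Sum>a\<in>A. F i j (g a))"
  using module_hom_F module_hom.sum by blast

lemma F_zero: "i \<in> qI N \<Longrightarrow> j \<in> qI N \<Longrightarrow> F i j 0 = 0"
  using module_hom_F module_hom.zero by blast

lemma C_scale: "c \<in> qI N \<Longrightarrow> d \<in> qI N \<Longrightarrow> C n c d (sc r x) = sc r (C n c d x)"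
  using module_hom_C module_hom.scale by blast

lemma C_zero: "c \<in> qI N \<Longrightarrow> d \<in> qI N \<Longrightarrow> C n c d 0 = 0"
  using module_hom_C module_hom.zero by blast

lemma F_supercomm_sum:
  assumes a: "a \<in> qI N" and b: "b \<in> qI N" and c: "c \<in> qI N"
  shows "(\<Sum>k\<in>qI N. F a b (F c k (x k))) =
      (\<Sum>k\<in>qI N. sc (qsgn a b c k) (F c k (F a b (x k))))
      + (if c = b then \<Sum>k\<in>qI N. F a k (x k) else 0)
      - sc (qsgn a b c a) (F c b (x a))
      + (if c = - b then \<Sum>k\<in>qI N. F (- a) k (x k) else 0)
      - sc (qsgn a b c (- a)) (F c (- b) (x (- a)))"
proof -
  have "F a b (F c k (x k)) = sc (qsgn a b c k) (F c k (F a b (x k)))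
      + ((if c = b then F a k (x k) else 0)
      - sc (qsgn a b c k) (if a = k then F c b (x k) else 0)
      + (if c = - b then F (- a) k (x k) else 0)
      - sc (qsgn a b c k) (if - a = k then F c (- b) (x k) else 0))"
    if "k \<in> qI N" for k
    using F_supercomm[OF a b c that, of "x k"] by (metis add.commute diff_eq_eq)
  then show ?thesis
    using a b by (simp add: scale_if_zero sum.distrib sum_subtractf cong: sum.cong)
qed

lemma F_C_supercomm:
  assumes n: "n \<ge> 1" and a: "a \<in> qI N" and b: "b \<in> qI N" and c: "c \<in> qI N" and d: "d \<in> qI N"
  shows "F a b (C n c d w) - sc (qsgn a b c d) (C n c d (F a b w)) =
          (if c = b then C n a d w else 0)
          - sc (qsgn a b c d) (if a = d then C n c b w else 0)
          + (if c = - b then C n (- a) d w else 0)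
          - sc (qsgn a b c d) (if - a = d then C n c (- b) w else 0)"
  using n c
proof (induction n arbitrary: c rule: dec_induct)
  case base
  then show ?case
    using F_supercomm[OF a b _ d] by simp
next
  case (step n c)
  let ?s = "qsgn a b c d"
  define T where "T k x = sc (qsgn a b c k * qsign k) (F c k x)" for k x
  define R where "R k = (if k = b then C n a d w else 0)
      - sc (qsgn a b k d) (if a = d then C n k b w else 0)
      + (if k = - b then C n (- a) d w else 0)
      - sc (qsgn a b k d) (if - a = d then C n k (- b) w else 0)" for k
  have C_Suc_n: "C (Suc n) p q x = (\<Sum>k\<in>qI N. F p k (sc (qsign k) (C n k q x)))" for p q x
    using C_Suc[OF step.hyps(1)] .
  have T_add: "T k (x + y) = T k x + T k y" and T_diff: "T k (x - y) = T k x - T k y"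
    and T_if: "T k (if P then x else 0) = (if P then T k x else 0)" if "k \<in> qI N" for k x y P
    using that step.prems by (simp_all add: T_def F_add F_diff F_zero scale_right_distrib
        scale_right_diff_distrib)
  have T_qsgn: "T k (sc (qsgn a b k d) x) = sc ?s (F c k (sc (qsign k) x))" if "k \<in> qI N" for k x
    using that step.prems by (simp add: T_def F_scale qsgn_mult[of a b c k d, symmetric] mult_ac)
  have IH: "F a b (C n k d w) = sc (qsgn a b k d) (C n k d (F a b w)) + R k" if "k \<in> qI N" for k
    using step.IH[OF that] unfolding R_def by (simp add: algebra_simps)
  have "F a b (C (Suc n) c d w) = (\<Sum>k\<in>qI N. T k (F a b (C n k d w)))
      + (if c = b then C (Suc n) a d w else 0) - T b (C n a d w)
      + (if c = - b then C (Suc n) (- a) d w else 0) - T (- b) (C n (- a) d w)"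
    using F_supercomm_sum[OF a b step.prems, of "\<lambda>k. sc (qsign k) (C n k d w)"] a b step.prems
      qsgn_qsign_swap[of a b c] qsgn_qsign_swap_uminus[of a b c] qI_nonzero[OF a] qI_nonzero[OF b]
    by (simp add: C_Suc_n F_sum F_scale T_def)
  also have "(\<Sum>k\<in>qI N. T k (F a b (C n k d w))) =
      sc ?s (C (Suc n) c d (F a b w)) + (\<Sum>k\<in>qI N. T k (R k))"
    by (simp add: IH T_add T_qsgn sum.distrib C_Suc_n scale_sum_right cong: sum.cong)
  also have "(\<Sum>k\<in>qI N. T k (R k)) = T b (C n a d w)
      - (if a = d then sc ?s (C (Suc n) c b w) else 0)
      + T (- b) (C n (- a) d w)
      - (if - a = d then sc ?s (C (Suc n) c (- b) w) else 0)"
    using b step.prems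
    by (simp add: R_def T_add T_diff T_if T_qsgn F_zero sum.distrib sum_subtractf C_Suc_n
        scale_sum_right cong: sum.cong)
  finally have "F a b (C (Suc n) c d w) = sc ?s (C (Suc n) c d (F a b w))
      + ((if c = b then C (Suc n) a d w else 0)
      - (if a = d then sc ?s (C (Suc n) c b w) else 0)
      + (if c = - b then C (Suc n) (- a) d w else 0)
      - (if - a = d then sc ?s (C (Suc n) c (- b) w) else 0))"
    by (simp add: algebra_simps)
  then show ?case
    by (simp add: scale_if_zero algebra_simps)
qed

lemma C_uminus:
  assumes n: "n \<ge> 1" and c: "c \<in> qI N" and d: "d \<in> qI N"
  shows "C n (- c) (- d) w = sc ((-1) ^ (n - 1)) (C n c d w)"
  using n c
proof (induction n arbitrary: c rule: dec_induct)
  case base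
  then show ?case
    using F_uminus[OF base d] by simp
next
  case (step n c)
  have sign: "(-1::complex) ^ n = - ((-1) ^ (n - 1))"
    using step.hyps(1) by (cases n) auto
  have "C (Suc n) (- c) (- d) w
      = (\<Sum>k\<in>qI N. F (- c) (- k) (sc (qsign (- k)) (C n (- k) (- d) w)))"
    unfolding C_Suc[OF step.hyps(1)] by (rule sum_qI_uminus)
  also have "\<dots> = (\<Sum>k\<in>qI N. sc ((-1) ^ (Suc n - 1)) (F c k (sc (qsign k) (C n k d w))))"
    using step.prems step.IH F_uminus qsign_uminus qI_nonzero
    by (intro sum.cong) (simp_all add: sign F_scale F_neg)
  finally show ?case
    by (simp add: C_Suc[OF step.hyps(1)] scale_sum_right)
qed

lemma F_uminus_diag_sq:
  assumes i: "i \<in> qI N"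
  shows "F (- i) i (F (- i) i w) = F i i w"
proof -
  have "qsgn (- i) i (- i) i = -1" and "- i \<noteq> i"
    using qI_nonzero[OF i] unfolding qsgn_def qpar_def by auto
  then have "F (- i) i (F (- i) i w) + F (- i) i (F (- i) i w) = F i i w + F i i w"
    using F_supercomm[of "- i" i "- i" i w] F_uminus[of i i] i by simp
  then have "sc 2 (F (- i) i (F (- i) i w)) = sc 2 (F i i w)"
    by (metis one_add_one scale_left_distrib scale_one)
  then show ?thesis
    by simp
qed

end

locale q_hw_module = q_module +
  fixes v and lam :: "int \<Rightarrow> complex"
  assumes F_hw: "\<lbrakk>a \<in> qI N; b \<in> qI N; \<bar>a\<bar> < \<bar>b\<bar>\<rbrakk> \<Longrightarrow> F a b v = 0"
    and F_weight: "a \<in> {1..int N} \<Longrightarrow> F a a v = sc (lam a) v"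
begin

lemma F_C_hw:
  assumes n: "n \<ge> 1" and a: "a \<in> qI N" and b: "b \<in> qI N" and d: "d \<in> qI N"
    and ab: "\<bar>a\<bar> < \<bar>b\<bar>"
  shows "F a b (C n b d v) = C n a d v
      - sc (qsgn a b b d) (if a = d then C n b b v else 0)
      - sc (qsgn a b b d) (if - a = d then C n b (- b) v else 0)"
  using F_C_supercomm[OF n a b b d, of v] F_hw[OF a b ab] qI_nonzero[OF b] C_zero[OF b d] by simp

lemma C_hw_eq_0:
  assumes n: "n \<ge> 1"
  shows "k \<in> qI N \<Longrightarrow> l \<in> qI N \<Longrightarrow> \<bar>k\<bar> < \<bar>l\<bar> \<Longrightarrow> C n k l v = 0"
  using n
proof (induction n arbitrary: k l rule: dec_induct)
  case base
  then show ?case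
    using F_hw by simp
next
  case (step n k l)
  have "F k m (sc (qsign m) (C n m l v)) = 0" if m: "m \<in> qI N" for m
  proof (cases "\<bar>m\<bar> < \<bar>l\<bar>")
    case True
    then show ?thesis
      using step.IH[OF m step.prems(2)] step.prems m by (simp add: F_zero C_zero)
  next
    case False
    then have "F k m (C n m l v) = C n k l v"
      using F_C_hw[OF step.hyps(1) step.prems(1) m step.prems(2)] step.prems by auto
    then show ?thesis
      using step.IH[OF step.prems] step.prems m by (simp add: F_scale)
  qed
  then show ?case
    by (simp add: C_Suc[OF step.hyps(1)])
qed

lemma F_C_weight:
  assumes n: "n \<ge> 1" and i: "i \<in> {1..int N}" and c: "c = i \<or> c = - i"
  shows "F i i (C n c i v) = sc (lam i) (C n c i v)"
proof -
  have "i \<in> qI N" "c \<in> qI N" "i \<noteq> - i" "qsgn i i c i = 1"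
    using i c unfolding qI_def qsgn_def qpar_def by auto
  then show ?thesis
    using F_C_supercomm[of n i i c i v] n c F_weight[OF i] by (auto simp: C_scale)
qed

lemma C_Suc_hw_split:
  assumes n: "n \<ge> 1" and i: "i \<in> {1..int N}" and c: "c \<in> qI N"
  shows "C (Suc n) c i v = F c i (C n i i v) - F c (- i) (C n (- i) i v)
      + (\<Sum>j\<in>{i+1..int N}. F c j (C n j i v) - F c (- j) (C n (- j) i v))"
proof -
  have qsign_pos: "qsign j = 1" and qsign_neg: "qsign (- j) = -1" if "j \<ge> 1" for j
    using that unfolding qpar_def by auto
  have "i \<in> qI N"
    using i unfolding qI_def by auto
  then have "C (Suc n) c i v = F c i (sc (qsign i) (C n i i v))
      + F c (- i) (sc (qsign (- i)) (C n (- i) i v))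
      + (\<Sum>j\<in>{i+1..int N}. F c j (sc (qsign j) (C n j i v))
          + F c (- j) (sc (qsign (- j)) (C n (- j) i v)))"
    unfolding C_Suc[OF n] using C_hw_eq_0[OF n] c by (intro sum_qI_from[OF i]) (simp add: F_zero)
  also have "\<dots> = F c i (C n i i v) - F c (- i) (C n (- i) i v)
      + (\<Sum>j\<in>{i+1..int N}. F c j (C n j i v) - F c (- j) (C n (- j) i v))"
    using i c by (auto simp: qsign_pos qsign_neg F_neg qI_def intro!: sum.cong)
  finally show ?thesis .
qed

lemma C_Suc_diag_hw:
  assumes n: "n \<ge> 1" and i: "i \<in> {1..int N}"
  shows "C (Suc n) i i v = sc (lam i) (C n i i v) - F (- i) i (C n (- i) i v)
      - (\<Sum>j\<in>{i+1..int N}. C n j j v + C n (- j) (- j) v)"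
proof -
  have ij: "i \<in> qI N" "- i \<in> qI N" "j \<in> qI N" "- j \<in> qI N"
    "qsgn i j j i = 1" "qsgn i (- j) (- j) i = -1" if "j \<in> {i+1..int N}" for j
    using i that unfolding qI_def qsgn_def qpar_def by auto
  have pair: "F i j (C n j i v) - F i (- j) (C n (- j) i v) = - (C n j j v + C n (- j) (- j) v)"
    if "j \<in> {i+1..int N}" for j
    using F_C_hw[OF n, of i j i] F_C_hw[OF n, of i "- j" i] ij[OF that] that i by simp
  have "(\<Sum>j\<in>{i+1..int N}. F i j (C n j i v) - F i (- j) (C n (- j) i v))
      = - (\<Sum>j\<in>{i+1..int N}. C n j j v + C n (- j) (- j) v)"
    unfolding sum_negf[symmetric] by (rule sum.cong) (simp_all add: pair)
  moreover have "F i (- i) = F (- i) i"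
    using F_uminus[of "- i" i] i unfolding qI_def by auto
  ultimately show ?thesis
    using C_Suc_hw_split[OF n i] F_C_weight[OF n i] i unfolding qI_def by simp
qed

lemma C_Suc_antidiag_hw:
  assumes n: "n \<ge> 1" and i: "i \<in> {1..int N}"
  shows "C (Suc n) (- i) i v = F (- i) i (C n i i v) - sc (lam i) (C n (- i) i v)
      + (\<Sum>j\<in>{i+1..int N}. C n (- j) j v - C n j (- j) v)"
proof -
  have ij: "i \<in> qI N" "- i \<in> qI N" "j \<in> qI N" "- j \<in> qI N"
    "qsgn (- i) j j i = 1" "qsgn (- i) (- j) (- j) i = 1" if "j \<in> {i+1..int N}" for j
    using i that unfolding qI_def qsgn_def qpar_def by auto
  have "F (- i) j (C n j i v) - F (- i) (- j) (C n (- j) i v) = C n (- j) j v - C n j (- j) v"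
    if "j \<in> {i+1..int N}" for j
    using F_C_hw[OF n, of "- i" j i] F_C_hw[OF n, of "- i" "- j" i] ij[OF that] that i
    by simp
  moreover have "F (- i) (- i) = F i i"
    using F_uminus[of i i] i unfolding qI_def by auto
  ultimately show ?thesis
    using C_Suc_hw_split[OF n i] F_C_weight[OF n i, of "- i"] i unfolding qI_def
    by simp
qed

lemma C_diag_odd_step:
  assumes i: "i \<in> {1..int N}"
  shows "C (2*m+3) i i v = sc (lam i * (lam i - 1)) (C (2*m+1) i i v)
      - sc (2 * lam i) (\<Sum>j\<in>{i+1..int N}. C (2*m+1) j j v)"
proof -
  define n where "n = 2*m+1"
  have n: "n \<ge> 1" "Suc n \<ge> 1" and odd_sign: "(-1::complex) ^ (n - 1) = 1"
    and even_sign: "(-1::complex) ^ (Suc n - 1) = -1"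
    unfolding n_def by auto
  have qI: "i \<in> qI N" "- i \<in> qI N" and qI_gt: "\<And>j. j \<in> {i+1..int N} \<Longrightarrow> j \<in> qI N"
    using i unfolding qI_def by auto
  define A B S where "A = C n i i v" and "B = C n (- i) i v"
    and "S = (\<Sum>j\<in>{i+1..int N}. C n j j v)"
  \<comment> \<open>By \<open>C_uminus\<close> the terms of index \<open>-j\<close> double those of index \<open>j\<close> at the odd level n
     and cancel them at the even level n + 1.\<close>
  have sym: "C n (- j) (- j) v = C n j j v" "C n (- j) j v = C n j (- j) v"
    "C (Suc n) (- j) (- j) v = - C (Suc n) j j v" if "j \<in> {i+1..int N}" for j
    using C_uminus[OF n(1), of j j v] C_uminus[OF n(1), of j "- j" v] C_uminus[OF n(2), of j j v]
      qI_gt[OF that] odd_sign even_sign by simp_all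
  have "(\<Sum>j\<in>{i+1..int N}. C n j j v + C n (- j) (- j) v) = S + S"
    and "(\<Sum>j\<in>{i+1..int N}. C n (- j) j v - C n j (- j) v) = 0"
    and "(\<Sum>j\<in>{i+1..int N}. C (Suc n) j j v + C (Suc n) (- j) (- j) v) = 0"
    by (simp_all add: S_def sym sum.distrib[symmetric] del: atLeastAtMost_iff cong: sum.cong)
  then have diag: "C (Suc n) i i v = sc (lam i) A - F (- i) i B - (S + S)"
    and antidiag: "C (Suc n) (- i) i v = F (- i) i A - sc (lam i) B"
    and diag2: "C (Suc (Suc n)) i i v
      = sc (lam i) (C (Suc n) i i v) - F (- i) i (C (Suc n) (- i) i v)"
    using C_Suc_diag_hw[OF n(1) i] C_Suc_antidiag_hw[OF n(1) i] C_Suc_diag_hw[OF n(2) i]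
    by (simp_all add: A_def B_def del: qC.simps)
  have "F (- i) i (C (Suc n) (- i) i v) = sc (lam i) A - sc (lam i) (F (- i) i B)"
    using F_uminus_diag_sq[OF qI(1)] F_C_weight[OF n(1) i] qI
    by (simp add: antidiag A_def F_diff F_scale)
  then have "C (Suc (Suc n)) i i v = sc (lam i * (lam i - 1)) A - sc (2 * lam i) S"
    unfolding diag2 diag
    by (simp add: scale_right_diff_distrib scale_left_diff_distrib scale_right_distrib
        algebra_simps flip: scale_left_distrib)
  then show ?thesis
    by (simp add: A_def S_def n_def numeral_3_eq_3 del: qC.simps)
qed

end

primrec hw_coeff :: "nat \<Rightarrow> (int \<Rightarrow> complex) \<Rightarrow> nat \<Rightarrow> int \<Rightarrow> complex" where
  "hw_coeff N lam 0 = lam"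
| "hw_coeff N lam (Suc m) = (\<lambda>j. lam j * (lam j - 1) * hw_coeff N lam m j
      - 2 * lam j * (\<Sum>l\<in>{j+1..int N}. hw_coeff N lam m l))"

lemma (in q_hw_module) C_diag_odd_hw:
  "j \<in> {1..int N} \<Longrightarrow> C (2*m+1) j j v = sc (hw_coeff N lam m j) v"
proof (induction m arbitrary: j)
  case 0
  then show ?case
    using F_weight by simp
next
  case (Suc m)
  have "(\<Sum>l\<in>{j+1..int N}. C (2*m+1) l l v) = (\<Sum>l\<in>{j+1..int N}. sc (hw_coeff N lam m l) v)"
    using Suc.prems Suc.IH by (intro sum.cong) auto
  then have "C (2*m+3) j j v = sc (hw_coeff N lam (Suc m) j) v"
    using C_diag_odd_step[OF Suc.prems, of m] Suc.IH[OF Suc.prems]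
    by (simp add: scale_sum_left[symmetric] scale_left_diff_distrib)
  then show ?case
    by (simp add: numeral_3_eq_3 del: qC.simps)
qed

unbundle fps_syntax

text \<open>Laurent series are taken in X = u^-1, so \<open>fls_X_inv\<close> plays the role of u.\<close>

definition hw_series :: "nat \<Rightarrow> (int \<Rightarrow> complex) \<Rightarrow> int \<Rightarrow> complex fls" where
  "hw_series N lam j = fps_to_fls (Abs_fps (\<lambda>n. if odd n then hw_coeff N lam (n div 2) j else 0))"

definition hw_prod :: "nat \<Rightarrow> (int \<Rightarrow> complex) \<Rightarrow> int \<Rightarrow> complex fls" where
  "hw_prod N lam i = (\<Prod>j\<in>{i+1..int N}. (fls_X_inv ^ 2 - fls_const (lam j * (lam j + 1)))
      * inverse (fls_X_inv ^ 2 - fls_const (lam j * (lam j - 1))))"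

lemma hw_series_nth:
  "hw_series N lam j $$ n = (if 0 \<le> n \<and> odd n then hw_coeff N lam (nat n div 2) j else 0)"
  unfolding hw_series_def by (auto simp: even_nat_iff)

lemma hw_series_eq:
  "hw_series N lam j * (fls_X_inv ^ 2 - fls_const (lam j * (lam j - 1)))
     = fls_const (lam j) * fls_X_inv - 2 * fls_const (lam j) * (\<Sum>l\<in>{j+1..int N}. hw_series N lam l)"
proof (rule fls_eqI)
  fix n :: int
  let ?G = "hw_series N lam"
  have "(?G j * (fls_X_inv ^ 2 - fls_const (lam j * (lam j - 1)))) $$ n
      = ?G j $$ (n + 2) - lam j * (lam j - 1) * ?G j $$ n"
    by (simp add: algebra_simps fls_X_inv_power_times_conv_shift)
  also have "\<dots> = (if n = -1 then lam j else 0) - 2 * lam j * (\<Sum>l\<in>{j+1..int N}. ?G l $$ n)"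
  proof (cases "0 \<le> n \<and> odd n")
    case True
    then obtain b where "n = 2 * b + 1" and "0 \<le> b"
      by (auto elim!: oddE)
    then obtain k where k: "n = 2 * int k + 1"
      using nonneg_int_cases by metis
    then have "nat n div 2 = k" and "nat (n + 2) div 2 = Suc k"
      by (simp_all add: nat_add_distrib)
    then show ?thesis
      using k by (simp add: hw_series_nth sum_distrib_left algebra_simps)
  next
    case False
    then show ?thesis
      by (auto simp: hw_series_nth elim!: oddE) presburger
  qed
  also have "\<dots> = (fls_const (lam j) * fls_X_inv - 2 * fls_const (lam j)
      * (\<Sum>l\<in>{j+1..int N}. ?G l)) $$ n"
    by (simp add: fls_nth_sum mult.assoc)
  finally show "(?G j * (fls_X_inv ^ 2 - fls_const (lam j * (lam j - 1)))) $$ n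
      = (fls_const (lam j) * fls_X_inv - 2 * fls_const (lam j) * (\<Sum>l\<in>{j+1..int N}. ?G l)) $$ n" .
qed

lemma fls_X_inv_sq_minus_const_nonzero: "fls_X_inv ^ 2 - fls_const c \<noteq> (0 :: 'a::ring_1 fls)"
proof
  assume "fls_X_inv ^ 2 - fls_const c = (0 :: 'a fls)"
  then have "(fls_X_inv ^ 2 - fls_const c) $$ (-2) = (0 :: 'a fls) $$ (-2)"
    by simp
  then show False
    by simp
qed

lemma triangular_step:
  fixes G S X D l P :: "'a::field"
  assumes "D \<noteq> 0" and "G * D = l * X - 2 * l * S" and "2 * S = X * (1 - P)"
  shows "G = l * X * inverse D * P" and "2 * (G + S) = X * (1 - (D - 2 * l) * inverse D * P)"
proof -
  have "G * D = l * X - l * (2 * S)"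
    using assms(2) by (simp add: algebra_simps)
  also have "\<dots> = l * X * P"
    unfolding assms(3) by (simp add: algebra_simps)
  finally have "G * D = l * X * P" .
  then show G: "G = l * X * inverse D * P"
    using assms(1) by (simp add: field_simps)
  show "2 * (G + S) = X * (1 - (D - 2 * l) * inverse D * P)"
    using assms(1) unfolding distrib_left assms(3) G by (simp add: field_simps)
qed

lemma hw_series_tail:
  assumes "i \<le> int N"
  shows "2 * (\<Sum>j\<in>{i+1..int N}. hw_series N lam j) = fls_X_inv * (1 - hw_prod N lam i)"
  using assms
proof (induction i rule: int_le_induct)
  case base
  then show ?case
    by (simp add: hw_prod_def)
next
  case (step i)
  let ?D = "fls_X_inv ^ 2 - fls_const (lam i * (lam i - 1))"
  have "{i..int N} = insert i {i+1..int N}"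
    using step.hyps by auto
  then have sum: "(\<Sum>j\<in>{i - 1 + 1..int N}. hw_series N lam j)
      = hw_series N lam i + (\<Sum>j\<in>{i+1..int N}. hw_series N lam j)"
    and prod: "hw_prod N lam (i - 1) = (fls_X_inv ^ 2 - fls_const (lam i * (lam i + 1)))
      * inverse ?D * hw_prod N lam i"
    by (simp_all add: hw_prod_def mult.assoc)
  have "2 * fls_const (lam i) = fls_const (2 * lam i)"
    by (metis fls_const_mult_const fls_const_numeral)
  then have "fls_X_inv ^ 2 - fls_const (lam i * (lam i + 1)) = ?D - 2 * fls_const (lam i)"
    by (simp only: diff_diff_eq fls_plus_const) (simp add: algebra_simps)
  then show ?case
    unfolding sum prod
    using triangular_step(2)[OF fls_X_inv_sq_minus_const_nonzero hw_series_eq step.IH] by simp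
qed

lemma hw_series_closed_form:
  "i \<le> int N \<Longrightarrow> hw_series N lam i = fls_const (lam i) * fls_X_inv
     * inverse (fls_X_inv ^ 2 - fls_const (lam i * (lam i - 1))) * hw_prod N lam i"
  using triangular_step(1)[OF fls_X_inv_sq_minus_const_nonzero hw_series_eq hw_series_tail] .

theorem mainTheorem11:
  fixes N :: nat
    and sc :: "complex \<Rightarrow> 'v::ab_group_add \<Rightarrow> 'v"
    and F :: "int \<Rightarrow> int \<Rightarrow> 'v \<Rightarrow> 'v"
    and v :: 'v
    and lam :: "int \<Rightarrow> complex"
    and i :: int
  assumes rep: "qN_rep N sc F"
    and hw: "\<forall>a\<in>qI N. \<forall>b\<in>qI N. \<bar>a\<bar> < \<bar>b\<bar> \<longrightarrow> F a b v = 0"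
    and wt: "\<forall>a\<in>{1..int N}. F a a v = sc (lam a) v"
    and v_nz: "v \<noteq> 0"
    and i: "i \<in> {1..int N}"
  shows "(\<forall>m::nat. \<exists>c. qC N sc F (2*m+1) i i v = sc c v) \<and>
         (\<forall>a::nat \<Rightarrow> complex. (\<forall>m. qC N sc F (2*m+1) i i v = sc (a m) v) \<longrightarrow>
            fps_to_fls (Abs_fps (\<lambda>n. if odd n then a (n div 2) else 0)) =
              fls_const (lam i) * fls_X_inv
              * inverse (fls_X_inv ^ 2 - fls_const (lam i * (lam i - 1)))
              * (\<Prod>j\<in>{i+1..int N}.
                   (fls_X_inv ^ 2 - fls_const (lam j * (lam j + 1)))
                   * inverse (fls_X_inv ^ 2 - fls_const (lam j * (lam j - 1)))))"
proof -
  interpret q_hw_module sc N F v lam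
    using qN_rep_imp_q_module[OF rep] hw wt by (simp add: q_hw_module_def q_hw_module_axioms_def)
  have coeff: "qC N sc F (2*m+1) i i v = sc (hw_coeff N lam m i) v" for m
    using C_diag_odd_hw[OF i] .
  have "fps_to_fls (Abs_fps (\<lambda>n. if odd n then a (n div 2) else 0)) = hw_series N lam i"
    if "\<forall>m. qC N sc F (2*m+1) i i v = sc (a m) v" for a
  proof -
    have "a m = hw_coeff N lam m i" for m
      using that coeff v_nz by (metis scale_cancel_right)
    then have "a = (\<lambda>m. hw_coeff N lam m i)" ..
    then show ?thesis
      unfolding hw_series_def by (simp only:)
  qed
  then show ?thesis
    using coeff hw_series_closed_form[of i N lam] i unfolding hw_prod_def by auto
qed

end
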